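(* Let $R$ be an associative ring with identity, and let $a,b,c,d\in R$ satisfy $bdb=bac$ and $dbd=acd$. If $ac\in R^{\dagger}$, then $bd\in R^{\dagger}$, $(bd)^{\dagger}=b\big((ac)^{\dagger}\big)^2d$, and $i(bd)\le i(ac)+1$.
   Context: For $x\in R$, $\mathrm{comm}(x)=\{y\in R : xy=yx\}$ and $\mathrm{comm}^2(x)=\{y\in R : yz=zy \text{ for all } z\in\mathrm{comm}(x)\}$. $R^{rad}$ is the Jacobson radical of $R$. An element $x$ has a p-Drazin (pseudo Drazin) inverse if there is $y\in R$ with $y=yxy$, $y\in\mathrm{comm}^2(x)$ and $x^k-x^{k+1}y\in R^{rad}$ for some $k\in\mathbb{N}$; such $y$ is unique and denoted $x^{\dagger}$; $R^{\dagger}$ is the set of such $x$. The smallest such $k$ is the p-Drazin index $i(x)$. *)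

theory Defs
  imports Main
begin

definition comm :: "'a::ring_1 \<Rightarrow> 'a set" where
  "comm x = {y. x * y = y * x}"

definition comm2 :: "'a::ring_1 \<Rightarrow> 'a set" where
  "comm2 x = {y. \<forall>z\<in>comm x. y * z = z * y}"

definition left_ideal :: "'a::ring_1 set \<Rightarrow> bool" where
  "left_ideal I \<longleftrightarrow> 0 \<in> I \<and> (\<forall>x\<in>I. \<forall>y\<in>I. x + y \<in> I) \<and> (\<forall>x\<in>I. - x \<in> I)
     \<and> (\<forall>r x. x \<in> I \<longrightarrow> r * x \<in> I)"

definition maximal_left_ideal :: "'a::ring_1 set \<Rightarrow> bool" where
  "maximal_left_ideal I \<longleftrightarrow> left_ideal I \<and> I \<noteq> UNIV \<and>
     (\<forall>J. left_ideal J \<and> I \<subseteq> J \<longrightarrow> J = I \<or> J = UNIV)"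

definition jrad :: "'a::ring_1 set" where
  "jrad = \<Inter> {I. maximal_left_ideal I}"

definition is_pdrazin_inv :: "'a::ring_1 \<Rightarrow> 'a \<Rightarrow> bool" where
  "is_pdrazin_inv x y \<longleftrightarrow> y = y * x * y \<and> y \<in> comm2 x \<and>
     (\<exists>k::nat. k \<ge> 1 \<and> x ^ k - x ^ (k + 1) * y \<in> jrad)"

definition pdrazin_set :: "'a::ring_1 set" where
  "pdrazin_set = {x. \<exists>y. is_pdrazin_inv x y}"

definition pdrazin :: "'a::ring_1 \<Rightarrow> 'a" where
  "pdrazin x = (THE y. is_pdrazin_inv x y)"

definition pdrazin_index :: "'a::ring_1 \<Rightarrow> nat" where
  "pdrazin_index x = (LEAST k. k \<ge> 1 \<and> x ^ k - x ^ (k + 1) * pdrazin x \<in> jrad)"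

end

theory Submission
  imports Defs
begin

text \<open>The hypotheses say that \<open>b\<close> and \<open>d\<close> intertwine \<open>x = ac\<close> and \<open>bd\<close>:
  \<open>b x = (bd) b\<close> and \<open>x d = d (bd)\<close>, so \<open>(bd)^(k+1) = b x^k d\<close>. For \<open>y = x\<^sup>\<dagger>\<close> the element
  \<open>z = b y^2 d\<close> inherits \<open>z (bd) z = z\<close> and \<open>z \<in> comm\<^sup>2(bd)\<close> from \<open>y\<close>, because \<open>d w b\<close>
  commutes with \<open>x\<close>, hence with \<open>y\<close>, whenever \<open>w\<close> commutes with \<open>bd\<close>. Moreover
  \<open>(bd)^(k+1) - (bd)^(k+2) z = b (x^k - x^(k+1) y) d\<close>, which lies in the radical because the
  Jacobson radical is a two-sided ideal; this also gives the index bound. p-Drazin inverses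
  are unique: for two of them, \<open>e = xy\<close> and \<open>f = xy'\<close> are commuting idempotents and
  \<open>e (1 - f)\<close> is an idempotent in the radical, hence \<open>0\<close>.\<close>

section \<open>The Jacobson radical\<close>

lemma left_ideal_eq_UNIV_iff:
  assumes "left_ideal I" shows "I = UNIV \<longleftrightarrow> (1::'a::ring_1) \<in> I"
  using assms unfolding left_ideal_def by (metis UNIV_I UNIV_eq_I mult_1_right)

lemma left_ideal_principal: "left_ideal (range (\<lambda>r. r * (x::'a::ring_1)))"
  unfolding left_ideal_def
proof (intro conjI ballI allI impI)
  have "0 * x \<in> range (\<lambda>r. r * x)" by (rule rangeI)
  then show "0 \<in> range (\<lambda>r. r * x)" by simp
next
  fix u v assume "u \<in> range (\<lambda>r. r * x)" "v \<in> range (\<lambda>r. r * x)"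
  then obtain a b where "u = a * x" "v = b * x" by blast
  moreover have "(a + b) * x \<in> range (\<lambda>r. r * x)" by (rule rangeI)
  ultimately show "u + v \<in> range (\<lambda>r. r * x)" by (simp add: distrib_right)
next
  fix u assume "u \<in> range (\<lambda>r. r * x)"
  then obtain a where "u = a * x" by blast
  moreover have "(- a) * x \<in> range (\<lambda>r. r * x)" by (rule rangeI)
  ultimately show "- u \<in> range (\<lambda>r. r * x)" by simp
next
  fix q u assume "u \<in> range (\<lambda>r. r * x)"
  then obtain a where "u = a * x" by blast
  moreover have "(q * a) * x \<in> range (\<lambda>r. r * x)" by (rule rangeI)
  ultimately show "q * u \<in> range (\<lambda>r. r * x)" by (simp add: mult.assoc)
qed

lemma left_ideal_add_principal:
  assumes I: "left_ideal I"
  shows "left_ideal {m + r * (x::'a::ring_1) |m r. m \<in> I}" (is "left_ideal ?K")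
proof -
  have K: "m + r * x \<in> ?K" if "m \<in> I" for m r using that by blast
  have I0: "0 \<in> I" and I_add: "\<And>u v. u \<in> I \<Longrightarrow> v \<in> I \<Longrightarrow> u + v \<in> I"
    and I_neg: "\<And>u. u \<in> I \<Longrightarrow> - u \<in> I" and I_mult: "\<And>q u. u \<in> I \<Longrightarrow> q * u \<in> I"
    using I unfolding left_ideal_def by auto
  show ?thesis
    unfolding left_ideal_def
  proof (intro conjI ballI allI impI)
    show "0 \<in> ?K" using K[OF I0, of 0] by simp
  next
    fix u v assume "u \<in> ?K" "v \<in> ?K"
    then obtain m r n s where "u = m + r * x" "v = n + s * x" "m \<in> I" "n \<in> I" by blast
    then show "u + v \<in> ?K" using K[OF I_add, of m n "r + s"] by (simp add: algebra_simps)
  next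
    fix u assume "u \<in> ?K"
    then obtain m r where "u = m + r * x" "m \<in> I" by blast
    then show "- u \<in> ?K" using K[OF I_neg, of m "- r"] by simp
  next
    fix q u assume "u \<in> ?K"
    then obtain m r where "u = m + r * x" "m \<in> I" by blast
    then show "q * u \<in> ?K" using K[OF I_mult, of m q "q * r"] by (simp add: algebra_simps)
  qed
qed

lemma left_ideal_Union_chain:
  assumes "\<C> \<noteq> {}" "chain\<^sub>\<subseteq> \<C>" "\<And>I. I \<in> \<C> \<Longrightarrow> left_ideal I"
  shows "left_ideal (\<Union>\<C>)"
  unfolding left_ideal_def
proof (intro conjI ballI allI impI)
  show "0 \<in> \<Union>\<C>" using assms(1,3) unfolding left_ideal_def by blast
next
  fix u v assume "u \<in> \<Union>\<C>" "v \<in> \<Union>\<C>"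
  then obtain I J where "I \<in> \<C>" "J \<in> \<C>" "u \<in> I" "v \<in> J" by blast
  with assms(2) obtain K where "K \<in> \<C>" "u \<in> K" "v \<in> K"
    unfolding chain_subset_def by blast
  then show "u + v \<in> \<Union>\<C>" using assms(3) unfolding left_ideal_def by blast
next
  fix u assume "u \<in> \<Union>\<C>"
  then show "- u \<in> \<Union>\<C>" using assms(3) unfolding left_ideal_def by blast
next
  fix q u assume "u \<in> \<Union>\<C>"
  then show "q * u \<in> \<Union>\<C>" using assms(3) unfolding left_ideal_def by blast
qed

lemma left_ideal_maximal_extension:
  assumes "left_ideal I" "(1::'a::ring_1) \<notin> I"
  obtains M where "maximal_left_ideal M" "I \<subseteq> M"
proof -
  define \<A> where "\<A> = {J. left_ideal J \<and> I \<subseteq> J \<and> (1::'a) \<notin> J}"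
  have "\<exists>M\<in>\<A>. \<forall>J\<in>\<A>. M \<subseteq> J \<longrightarrow> J = M"
  proof (rule subset_Zorn_nonempty)
    show "\<A> \<noteq> {}" using assms by (auto simp: \<A>_def)
  next
    fix \<C> assume ne: "\<C> \<noteq> {}" and ch: "subset.chain \<A> \<C>"
    then have "\<C> \<subseteq> \<A>" "chain\<^sub>\<subseteq> \<C>" by (auto simp: subset_chain_def chain_subset_def)
    then have "left_ideal (\<Union>\<C>)" using ne left_ideal_Union_chain[of \<C>] by (auto simp: \<A>_def)
    moreover have "I \<subseteq> \<Union>\<C>" using ne \<open>\<C> \<subseteq> \<A>\<close> by (auto simp: \<A>_def)
    moreover have "1 \<notin> \<Union>\<C>" using \<open>\<C> \<subseteq> \<A>\<close> by (auto simp: \<A>_def)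
    ultimately show "\<Union>\<C> \<in> \<A>" by (simp add: \<A>_def)
  qed
  then obtain M where M: "M \<in> \<A>" and max: "\<And>J. J \<in> \<A> \<Longrightarrow> M \<subseteq> J \<Longrightarrow> J = M" by blast
  have "maximal_left_ideal M"
    unfolding maximal_left_ideal_def
  proof (intro conjI allI impI)
    show "left_ideal M" "M \<noteq> UNIV" using M by (auto simp: \<A>_def)
  next
    fix J assume J: "left_ideal J \<and> M \<subseteq> J"
    show "J = M \<or> J = UNIV"
    proof (cases "1 \<in> J")
      case False
      then have "J \<in> \<A>" using J M by (auto simp: \<A>_def)
      then show ?thesis using J max by blast
    qed (use J left_ideal_eq_UNIV_iff in blast)
  qed
  then show thesis using M that by (auto simp: \<A>_def)
qed

lemma mem_jrad_iff: "x \<in> jrad \<longleftrightarrow> (\<forall>r. \<exists>t. t * (1 - r * x) = (1::'a::ring_1))"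
proof
  assume x: "x \<in> jrad"
  show "\<forall>r. \<exists>t. t * (1 - r * x) = 1"
  proof (rule allI, rule ccontr)
    fix r assume "\<nexists>t. t * (1 - r * x) = 1"
    then have "1 \<notin> range (\<lambda>t. t * (1 - r * x))" by (auto simp: image_iff)
    then obtain M where M: "maximal_left_ideal M" and sub: "range (\<lambda>t. t * (1 - r * x)) \<subseteq> M"
      using left_ideal_maximal_extension[OF left_ideal_principal] by blast
    have LM: "left_ideal M" using M unfolding maximal_left_ideal_def by simp
    have "1 - r * x \<in> M" using sub rangeI[of _ 1] by (metis mult_1_left subsetD)
    moreover have "r * x \<in> M" using x M LM unfolding jrad_def left_ideal_def by blast
    ultimately have "(1 - r * x) + r * x \<in> M" using LM unfolding left_ideal_def by blast
    then show False using M LM left_ideal_eq_UNIV_iff unfolding maximal_left_ideal_def by auto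
  qed
next
  assume inv: "\<forall>r. \<exists>t. t * (1 - r * x) = 1"
  show "x \<in> jrad"
    unfolding jrad_def
  proof (rule InterI, rule ccontr)
    fix M assume "M \<in> {I. maximal_left_ideal I}" and "x \<notin> M"
    then have LM: "left_ideal M" and "M \<noteq> UNIV"
      and max: "\<And>J. left_ideal J \<Longrightarrow> M \<subseteq> J \<Longrightarrow> J = M \<or> J = UNIV"
      unfolding maximal_left_ideal_def by auto
    define K where "K = {m + r * x |m r. m \<in> M}"
    have LK: "left_ideal K" using left_ideal_add_principal[OF LM] by (simp add: K_def)
    have K: "m + r * x \<in> K" if "m \<in> M" for m r using that unfolding K_def by blast
    have "M \<subseteq> K" using K[of _ 0] by auto
    moreover have "x \<in> K" using K[of 0 1] LM unfolding left_ideal_def by simp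
    ultimately have "K = UNIV" using max[OF LK] \<open>x \<notin> M\<close> by blast
    then obtain m r where m: "m \<in> M" and one: "1 = m + r * x" unfolding K_def by blast
    obtain t where "t * (1 - r * x) = 1" using inv by blast
    then have "t * m = 1" using one by (metis add_diff_cancel_right')
    then have "1 \<in> M" using m LM unfolding left_ideal_def by metis
    then show False using LM \<open>M \<noteq> UNIV\<close> left_ideal_eq_UNIV_iff by blast
  qed
qed

lemma mult_mem_jrad_left: "x \<in> jrad \<Longrightarrow> r * x \<in> (jrad :: 'a::ring_1 set)"
  unfolding mem_jrad_iff by (metis mult.assoc)

text \<open>If \<open>t (1 - ba) = 1\<close>, then \<open>(1 + atb) (1 - ab) = 1\<close>.\<close>

lemma mult_mem_jrad_right:
  assumes "x \<in> jrad" shows "x * r \<in> (jrad :: 'a::ring_1 set)"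
  unfolding mem_jrad_iff
proof
  fix s
  obtain t where t: "t * (1 - (r * s) * x) = 1" using assms mem_jrad_iff by blast
  have "(1 + s * x * t * r) * (1 - s * (x * r)) = 1 - s * x * r + s * x * (t * (1 - r * s * x)) * r"
    by (simp add: algebra_simps mult.assoc)
  also have "\<dots> = 1" using t by (simp add: mult.assoc)
  finally show "\<exists>t. t * (1 - s * (x * r)) = 1" by blast
qed

lemma idempotent_mem_jrad_eq_0:
  assumes "p \<in> jrad" "p * p = p" shows "p = (0::'a::ring_1)"
proof -
  obtain t where t: "t * (1 - p) = 1" using assms(1) mem_jrad_iff[of p] by (metis mult_1_left)
  have "p = t * (1 - p) * p" using t by simp
  also have "\<dots> = 0" using assms(2) by (simp add: algebra_simps mult.assoc)
  finally show ?thesis .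
qed

section \<open>Uniqueness of the p-Drazin inverse\<close>

lemma comm2_commute: "y \<in> comm2 x \<Longrightarrow> z * x = x * z \<Longrightarrow> y * z = z * (y::'a::ring_1)"
  unfolding comm2_def comm_def by auto

lemma is_pdrazin_inv_commute: "is_pdrazin_inv x y \<Longrightarrow> y * x = x * (y::'a::ring_1)"
  unfolding is_pdrazin_inv_def using comm2_commute by blast

lemma power_mult_power_outer_inverse:
  assumes "y * x = x * (y::'a::ring_1)" "y * x * y = y" "n \<ge> 1"
  shows "y ^ n * x ^ n = x * y"
  using assms(3)
proof (induction n rule: nat_induct_at_least)
  case base
  then show ?case using assms(1) by simp
next
  case (Suc n)
  have "y ^ Suc n * x ^ Suc n = y * (y ^ n * x ^ n) * x"
    by (metis power_Suc power_Suc2 mult.assoc)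
  also have "\<dots> = (y * x * y) * x" using Suc.IH by (simp add: mult.assoc)
  also have "\<dots> = x * y" using assms by simp
  finally show ?case .
qed

lemma is_pdrazin_inv_idempotent: "is_pdrazin_inv x y \<Longrightarrow> x * y * (x * y) = x * (y::'a::ring_1)"
  unfolding is_pdrazin_inv_def by (metis mult.assoc)

lemma is_pdrazin_inv_idempotents_commute:
  assumes "is_pdrazin_inv x y" "is_pdrazin_inv x y'"
  shows "x * y * (x * y') = x * y' * (x * (y::'a::ring_1))"
proof -
  have "y * y' = y' * y"
    using assms comm2_commute is_pdrazin_inv_commute unfolding is_pdrazin_inv_def by blast
  then show ?thesis using assms[THEN is_pdrazin_inv_commute] by (metis mult.assoc)
qed

lemma is_pdrazin_inv_absorb:
  assumes y: "is_pdrazin_inv x y" and y': "is_pdrazin_inv x y'"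
  shows "x * y * (1 - x * y') = (0::'a::ring_1)"
proof (rule idempotent_mem_jrad_eq_0)
  obtain k where "k \<ge> 1" and "x ^ k - x ^ (k + 1) * y' \<in> jrad"
    using y' unfolding is_pdrazin_inv_def by blast
  moreover have "x ^ k - x ^ (k + 1) * y' = x ^ k * (1 - x * y')"
    by (simp add: algebra_simps power_Suc2 mult.assoc del: power_Suc)
  ultimately have "y ^ k * x ^ k * (1 - x * y') \<in> jrad"
    using mult_mem_jrad_left by (metis mult.assoc)
  moreover have "y ^ k * x ^ k = x * y"
    using y is_pdrazin_inv_commute power_mult_power_outer_inverse \<open>k \<ge> 1\<close>
    unfolding is_pdrazin_inv_def by metis
  ultimately show "x * y * (1 - x * y') \<in> jrad" by simp
next
  define e where "e = x * y"
  define f where "f = x * y'"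
  have "e * e = e" "f * f = f" "e * f = f * e"
    using is_pdrazin_inv_idempotent[OF y] is_pdrazin_inv_idempotent[OF y']
      is_pdrazin_inv_idempotents_commute[OF y y'] by (simp_all add: e_def f_def)
  then have "e * (1 - f) * (e * (1 - f)) = e * (1 - f)"
    by (simp add: algebra_simps) (metis mult.assoc)
  then show "x * y * (1 - x * y') * (x * y * (1 - x * y')) = x * y * (1 - x * y')"
    by (simp add: e_def f_def)
qed

lemma is_pdrazin_inv_unique:
  assumes y: "is_pdrazin_inv x y" and y': "is_pdrazin_inv x y'"
  shows "y = (y'::'a::ring_1)"
proof -
  have "x * y = x * y * (x * y')"
    using is_pdrazin_inv_absorb[OF y y'] by (simp add: right_diff_distrib)
  also have "\<dots> = x * y' * (x * y)"
    using is_pdrazin_inv_idempotents_commute[OF y y'] .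
  also have "\<dots> = x * y'"
    using is_pdrazin_inv_absorb[OF y' y] by (simp add: right_diff_distrib)
  finally have xy: "x * y = x * y'" .
  have "y = y * x * y" and "y' = y' * x * y'" "y * x = x * y" "y' * x = x * y'"
    using y y' is_pdrazin_inv_commute unfolding is_pdrazin_inv_def by auto
  then show ?thesis using xy by (metis mult.assoc)
qed

lemma pdrazin_eqI: "is_pdrazin_inv x y \<Longrightarrow> pdrazin x = y"
  unfolding pdrazin_def using is_pdrazin_inv_unique by blast

lemma pdrazin_index_mem:
  assumes "is_pdrazin_inv x y"
  shows "x ^ pdrazin_index x - x ^ (pdrazin_index x + 1) * y \<in> jrad"
  using assms LeastI_ex[of "\<lambda>k. k \<ge> 1 \<and> x ^ k - x ^ (k + 1) * pdrazin x \<in> jrad"]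
  unfolding pdrazin_index_def pdrazin_eqI[OF assms] is_pdrazin_inv_def by blast

lemma pdrazin_index_le:
  assumes "is_pdrazin_inv x y" "k \<ge> 1" "x ^ k - x ^ (k + 1) * y \<in> jrad"
  shows "pdrazin_index x \<le> k"
  unfolding pdrazin_index_def pdrazin_eqI[OF assms(1)] using assms(2,3) by (simp add: Least_le)

section \<open>Transfer along \<open>b\<close> and \<open>d\<close>\<close>

context
  fixes b d x y :: "'a::ring_1"
  assumes b_x: "b * x = b * d * b" and x_d: "x * d = d * b * d"
    and y: "is_pdrazin_inv x y"
begin

private lemma b_x_assoc: "b * (x * t) = b * (d * (b * t))"
  using b_x by (metis mult.assoc)

private lemma x_d_assoc: "x * (d * t) = d * (b * (d * t))"
  using x_d by (metis mult.assoc)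

private lemma y_y_x_assoc: "y * (y * (x * t)) = y * t"
  using y is_pdrazin_inv_commute unfolding is_pdrazin_inv_def by (metis mult.assoc)

private lemma x_y_y_assoc: "x * (y * (y * t)) = y * t"
  using y is_pdrazin_inv_commute unfolding is_pdrazin_inv_def by (metis mult.assoc)

lemma power_mult_b_transfer: "(b * d) ^ n * b = b * x ^ n"
proof (induction n)
  case (Suc n)
  have "(b * d) ^ Suc n * b = (b * d) ^ n * (b * d * b)" by (metis power_Suc2 mult.assoc)
  also have "\<dots> = (b * d) ^ n * b * x" using b_x by (simp add: mult.assoc)
  also have "\<dots> = b * x ^ Suc n" using Suc.IH by (metis power_Suc2 mult.assoc)
  finally show ?case .
qed simp

lemma inverse_commutes_transfer:
  assumes "w * (b * d) = b * d * w"
  shows "y * (d * w * b) = d * w * b * y"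
proof (rule comm2_commute)
  show "y \<in> comm2 x" using y unfolding is_pdrazin_inv_def by blast
  have "d * w * b * x = d * (w * (b * d)) * b" using b_x by (simp add: mult.assoc)
  also have "\<dots> = x * (d * w * b)" using assms x_d by (metis mult.assoc)
  finally show "d * w * b * x = x * (d * w * b)" .
qed

lemma outer_inverse_transfer: "b * y^2 * d * (b * d) * (b * y^2 * d) = b * y^2 * d"
proof -
  have y_db: "y * (d * (b * t)) = d * (b * (y * t))" for t
    using inverse_commutes_transfer[of 1] by (simp add: mult.assoc) (metis mult.assoc)
  have "b * y^2 * d * (b * d) * (b * y^2 * d) = b * (y * (y * (d * (b * (d * (b * (y * (y * d))))))))"
    by (simp add: power2_eq_square mult.assoc)
  also have "\<dots> = b * (y * (y * (x * (d * (b * (y * (y * d)))))))" by (simp add: x_d_assoc)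
  also have "\<dots> = b * (y * (d * (b * (y * (y * d)))))" by (simp add: y_y_x_assoc)
  also have "\<dots> = b * (y * (y * (y * (d * (b * d)))))" by (simp add: y_db)
  also have "\<dots> = b * (y * (y * (y * (x * d))))" using x_d by (simp add: mult.assoc)
  also have "\<dots> = b * y^2 * d" by (simp add: y_y_x_assoc power2_eq_square mult.assoc)
  finally show ?thesis .
qed

lemma comm2_transfer: "b * y^2 * d \<in> comm2 (b * d)"
  unfolding comm2_def comm_def
proof (intro CollectI ballI)
  fix w assume "w \<in> {v. b * d * v = v * (b * d)}"
  then have bd_w: "b * d * w = w * (b * d)" by simp
  have bd_w_assoc: "b * (d * (w * t)) = w * (b * (d * t))" for t
    using bd_w by (metis mult.assoc)
  have y_dwb: "y * (d * (w * (b * t))) = d * (w * (b * (y * t)))" for t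
    using inverse_commutes_transfer[of w] bd_w by (simp add: mult.assoc) (metis mult.assoc)
  have "b * y^2 * d * w = b * (y * (y * (y * (x * (d * w)))))"
    by (simp add: y_y_x_assoc power2_eq_square mult.assoc)
  also have "\<dots> = b * (y * (y * (y * (d * (w * (b * d))))))"
    using bd_w by (simp add: x_d_assoc mult.assoc)
  also have "\<dots> = b * (d * (w * (b * (y * (y * (y * d))))))" by (simp add: y_dwb)
  also have "\<dots> = w * (b * (x * (y * (y * (y * d)))))" by (simp add: bd_w_assoc b_x_assoc)
  also have "\<dots> = w * (b * y^2 * d)" by (simp add: x_y_y_assoc power2_eq_square mult.assoc)
  finally show "b * y^2 * d * w = w * (b * y^2 * d)" .
qed

lemma radical_transfer:
  assumes "x ^ k - x ^ (k + 1) * y \<in> jrad"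
  shows "(b * d) ^ (k + 1) - (b * d) ^ (k + 2) * (b * y^2 * d) \<in> jrad"
proof -
  have "(b * d) ^ (k + 1) = b * x ^ k * d"
    using power_mult_b_transfer[of k] by (metis power_Suc2 Suc_eq_plus1 mult.assoc)
  moreover have "(b * d) ^ (k + 2) * (b * y^2 * d) = b * (x ^ (k + 1) * y) * d"
  proof -
    have "(b * d) ^ (k + 2) * (b * y^2 * d) = (b * d) ^ (k + 2) * b * (y * (y * d))"
      by (simp add: power2_eq_square mult.assoc)
    also have "\<dots> = b * (x ^ (k + 1) * (x * (y * (y * d))))"
      unfolding power_mult_b_transfer by (simp add: mult.assoc power_Suc2 del: power_Suc)
    finally show ?thesis by (simp add: x_y_y_assoc mult.assoc)
  qed
  moreover have "b * (x ^ k - x ^ (k + 1) * y) * d \<in> jrad"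
    using assms mult_mem_jrad_left mult_mem_jrad_right by blast
  ultimately show ?thesis by (simp add: algebra_simps)
qed

lemma is_pdrazin_inv_transfer: "is_pdrazin_inv (b * d) (b * y^2 * d)"
proof -
  obtain k where "k \<ge> 1" "x ^ k - x ^ (k + 1) * y \<in> jrad"
    using y unfolding is_pdrazin_inv_def by blast
  then have "(b * d) ^ (k + 1) - (b * d) ^ (k + 1 + 1) * (b * y^2 * d) \<in> jrad"
    using radical_transfer by (simp add: add.assoc)
  then show ?thesis
    unfolding is_pdrazin_inv_def
    using outer_inverse_transfer comm2_transfer le_add2 by metis
qed

end

theorem theorem3p2:
  fixes a b c d :: "'a::ring_1"
  assumes "b * d * b = b * a * c" and "d * b * d = a * c * d"
    and "a * c \<in> pdrazin_set"
  shows "b * d \<in> pdrazin_set \<and>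
    pdrazin (b * d) = b * (pdrazin (a * c))^2 * d \<and>
    pdrazin_index (b * d) \<le> pdrazin_index (a * c) + 1"
proof -
  obtain y where y: "is_pdrazin_inv (a * c) y"
    using assms(3) unfolding pdrazin_set_def by blast
  have b_x: "b * (a * c) = b * d * b" and x_d: "a * c * d = d * b * d"
    using assms(1,2) by (simp_all add: mult.assoc)
  note transfer = is_pdrazin_inv_transfer[OF b_x x_d y] radical_transfer[OF b_x x_d y]
  have "pdrazin_index (b * d) \<le> pdrazin_index (a * c) + 1"
    using pdrazin_index_le[OF transfer(1)] transfer(2)[OF pdrazin_index_mem[OF y]] by simp
  then show ?thesis
    using transfer(1) pdrazin_eqI[OF y] pdrazin_eqI[OF transfer(1)]
    unfolding pdrazin_set_def by blast
qed

end
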